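(* Let $I\subseteq\{1,\dots,n\}$ and let $u_0$ be the longest element of $W_{\overline I^0}$. Then: (1) $F_I$ is the convex hull of $W_{\overline I^0}\lambda$; (2) $u_0\lambda$ is the least element of $P_I$ with respect to $\le$; (3) the space $E_{F_I}=\mathrm{Span}\{\mu-\nu\mid \mu,\nu\in F_I\}$ is spanned by the simple roots in $\Pi_{\overline I^0}=\{\alpha_j\mid j\in\overline I^0\}$, and $\dim E_{F_I}=|\overline I^0|$.
   Context: Let $\mathfrak g$ be a finite-dimensional complex simple Lie algebra with root system $\Phi$, base $\Pi=\{\alpha_1,\dots,\alpha_n\}$, Weyl group $W$. Let $E$ be the real span of $\Pi$ with $W$-invariant inner product $(\cdot,\cdot)$. Fix a dominant integral weight $\lambda$; $P(\lambda)$ is the set of weights of the irreducible module of highest weight $\lambda$. For $\mu\in E$, $c_i(\mu)$ is the coefficient of $\alpha_i$ in $\mu$ in the basis $\Pi$; $\lambda=\sum_i m_i\alpha_i$. Partial order: $\mu\le\nu$ iff $\nu-\mu$ is a nonnegative integer combination of simple roots. Weight polytope $\mathbf P=\mathrm{conv}(W\lambda)$. For $I\subseteq\{1,\dots,n\}$: $F_I=\{x\in\mathbf P\mid c_i(x)=m_i\ \forall i\in I\}$, $P_I=\{\mu\in P(\lambda)\mid c_i(\mu)=m_i\ \forall i\in I\}$. For $J\subseteq\{1,\dots,n\}$, $W_J$ is the subgroup generated by $s_{\alpha_j}$, $j\in J$. The extended Dynkin diagram is the Dynkin diagram of $\Pi$ with an extra node $\{-\lambda\}$ joined by a single edge to $\alpha_i$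 iff $(\lambda,\alpha_i)>0$. Let $\overline I$ be the complement of $I$ in $\{1,\dots,n\}$, and let $\Gamma^0$ be the connected component containing $\{-\lambda\}$ of the induced subdiagram on the vertex set $\{\alpha_j\mid j\in\overline I\}\cup\{-\lambda\}$; $\overline I^0$ is the set of indices $j$ such that $\alpha_j$ is a vertex of $\Gamma^0$. *)

theory Defs
  imports "HOL-Analysis.Analysis"
begin

definition refl :: "'a::euclidean_space \<Rightarrow> 'a \<Rightarrow> 'a" where
  "refl a x = x - ((2 * (x \<bullet> a)) / (a \<bullet> a)) *\<^sub>R a"

definition root_system :: "'a::euclidean_space set \<Rightarrow> bool" where
  "root_system Phi \<longleftrightarrow> finite Phi \<and> 0 \<notin> Phi \<and> span Phi = UNIV \<and>
     (\<forall>a\<in>Phi. refl a ` Phi = Phi) \<and>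
     (\<forall>a\<in>Phi. \<forall>b\<in>Phi. (2 * (b \<bullet> a)) / (a \<bullet> a) \<in> \<int>) \<and>
     (\<forall>a\<in>Phi. \<forall>c::real. c *\<^sub>R a \<in> Phi \<longrightarrow> c = 1 \<or> c = -1)"

definition irreducible_rs :: "'a::euclidean_space set \<Rightarrow> bool" where
  "irreducible_rs Phi \<longleftrightarrow> \<not> (\<exists>A B. A \<noteq> {} \<and> B \<noteq> {} \<and> A \<union> B = Phi \<and> A \<inter> B = {} \<and>
      (\<forall>a\<in>A. \<forall>b\<in>B. a \<bullet> b = 0))"

definition is_base :: "'a::euclidean_space set \<Rightarrow> (nat \<Rightarrow> 'a) \<Rightarrow> nat \<Rightarrow> bool" where
  "is_base Phi alpha n \<longleftrightarrow> inj_on alpha {1..n} \<and> alpha ` {1..n} \<subseteq> Phi \<and>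
     independent (alpha ` {1..n}) \<and>
     (\<forall>b\<in>Phi. \<exists>c::nat \<Rightarrow> int. b = (\<Sum>i=1..n. of_int (c i) *\<^sub>R alpha i) \<and>
        ((\<forall>i. c i \<ge> 0) \<or> (\<forall>i. c i \<le> 0)))"

definition coef :: "(nat \<Rightarrow> 'a::euclidean_space) \<Rightarrow> nat \<Rightarrow> 'a \<Rightarrow> nat \<Rightarrow> real" where
  "coef alpha n mu = (THE c. mu = (\<Sum>j=1..n. c j *\<^sub>R alpha j) \<and> (\<forall>j. j \<notin> {1..n} \<longrightarrow> c j = 0))"

inductive_set weyl_sub :: "(nat \<Rightarrow> 'a::euclidean_space) \<Rightarrow> nat set \<Rightarrow> ('a \<Rightarrow> 'a) set"
  for alpha J where
  id: "id \<in> weyl_sub alpha J"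
| step: "w \<in> weyl_sub alpha J \<Longrightarrow> j \<in> J \<Longrightarrow> refl (alpha j) \<circ> w \<in> weyl_sub alpha J"

definition weyl_length :: "(nat \<Rightarrow> 'a::euclidean_space) \<Rightarrow> nat set \<Rightarrow> ('a \<Rightarrow> 'a) \<Rightarrow> nat" where
  "weyl_length alpha J w = (LEAST k. \<exists>js. length js = k \<and> set js \<subseteq> J \<and>
      w = foldr (\<lambda>j f. refl (alpha j) \<circ> f) js id)"

definition longest_elem :: "(nat \<Rightarrow> 'a::euclidean_space) \<Rightarrow> nat set \<Rightarrow> ('a \<Rightarrow> 'a) \<Rightarrow> bool" where
  "longest_elem alpha J u \<longleftrightarrow> u \<in> weyl_sub alpha J \<and>
     (\<forall>w\<in>weyl_sub alpha J. weyl_length alpha J w \<le> weyl_length alpha J u)"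

definition wle :: "(nat \<Rightarrow> 'a::euclidean_space) \<Rightarrow> nat \<Rightarrow> 'a \<Rightarrow> 'a \<Rightarrow> bool" where
  "wle alpha n mu nu \<longleftrightarrow> (\<exists>c::nat \<Rightarrow> nat. nu - mu = (\<Sum>i=1..n. of_nat (c i) *\<^sub>R alpha i))"

definition integral_weight :: "(nat \<Rightarrow> 'a::euclidean_space) \<Rightarrow> nat \<Rightarrow> 'a \<Rightarrow> bool" where
  "integral_weight alpha n mu \<longleftrightarrow> (\<forall>i\<in>{1..n}. (2 * (mu \<bullet> alpha i)) / (alpha i \<bullet> alpha i) \<in> \<int>)"

definition dominant_integral :: "(nat \<Rightarrow> 'a::euclidean_space) \<Rightarrow> nat \<Rightarrow> 'a \<Rightarrow> bool" where
  "dominant_integral alpha n mu \<longleftrightarrow> (\<forall>i\<in>{1..n}. (2 * (mu \<bullet> alpha i)) / (alpha i \<bullet> alpha i) \<in> \<nat>)"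

text \<open>Weights of the irreducible module of highest weight lam (Humphreys 21.3):
  the dominant weights mu \<le> lam and their W-conjugates.\<close>
definition weights :: "(nat \<Rightarrow> 'a::euclidean_space) \<Rightarrow> nat \<Rightarrow> 'a \<Rightarrow> 'a set" where
  "weights alpha n lam = {w mu | w mu. w \<in> weyl_sub alpha {1..n} \<and>
      dominant_integral alpha n mu \<and> wle alpha n mu lam}"

definition weight_polytope :: "(nat \<Rightarrow> 'a::euclidean_space) \<Rightarrow> nat \<Rightarrow> 'a \<Rightarrow> 'a set" where
  "weight_polytope alpha n lam = convex hull ((\<lambda>w. w lam) ` weyl_sub alpha {1..n})"

definition face_F :: "(nat \<Rightarrow> 'a::euclidean_space) \<Rightarrow> nat \<Rightarrow> 'a \<Rightarrow> nat set \<Rightarrow> 'a set" where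
  "face_F alpha n lam I = {x \<in> weight_polytope alpha n lam.
      \<forall>i\<in>I. coef alpha n x i = coef alpha n lam i}"

definition face_P :: "(nat \<Rightarrow> 'a::euclidean_space) \<Rightarrow> nat \<Rightarrow> 'a \<Rightarrow> nat set \<Rightarrow> 'a set" where
  "face_P alpha n lam I = {mu \<in> weights alpha n lam.
      \<forall>i\<in>I. coef alpha n mu i = coef alpha n lam i}"

text \<open>Ibar^0: indices j of the complement of I such that alpha j lies in the connected
  component of the node -lam in the subdiagram of the extended Dynkin diagram induced on
  {alpha j | j in complement of I} \<union> {-lam}. Here -lam is joined to alpha i iff
  (lam, alpha i) > 0, and alpha i, alpha j (i \<noteq> j) are joined iff (alpha i, alpha j) \<noteq> 0.\<close>
inductive_set comp0 :: "(nat \<Rightarrow> 'a::euclidean_space) \<Rightarrow> nat \<Rightarrow> 'a \<Rightarrow> nat set \<Rightarrow> nat set"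
  for alpha n lam I where
  start: "j \<in> {1..n} - I \<Longrightarrow> lam \<bullet> alpha j > 0 \<Longrightarrow> j \<in> comp0 alpha n lam I"
| step: "i \<in> comp0 alpha n lam I \<Longrightarrow> j \<in> {1..n} - I \<Longrightarrow> j \<noteq> i \<Longrightarrow>
          alpha i \<bullet> alpha j \<noteq> 0 \<Longrightarrow> j \<in> comp0 alpha n lam I"

end

theory Submission
  imports Defs
begin

(*
  Every vertex w lam of the weight polytope lies below lam, so F_I is the face of conv(W lam)
  on which the linear forms c_i, i in I, attain their maximum, and it is the convex hull of
  the vertices lying on it. A vertex w lam on F_I differs from lam only in coordinates outside I;
  comparing it with its conjugate that is dominant for the parabolic subgroup W_Ibar, the two have
  equal norm and their difference pairs nonnegatively with the conjugate, which forces w lam to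
  lie in W_Ibar lam.
  Simple reflections indexed by Ibar but outside the component Gamma^0 fix lam and commute with
  W_Ibar0, so the vertices of F_I form the orbit W_Ibar0 lam.

  The displacements w lam - lam span the same space as the alpha_j, j in Ibar0: walking through
  Gamma^0 from -lam, each s_j moves lam, resp. the previous alpha_i, by a nonzero multiple of
  alpha_j.

  The longest element u0 of W_Ibar0 maps each alpha_j, j in Ibar0, to a negative root, so u0 lam
  lies below the whole orbit W_Ibar0 lam and hence below F_I, which contains P_I; since
  differences of weights have integer coordinates, this gives the order on P_I.
*)

section \<open>Reflections\<close>

lemma orthogonal_transformation_refl: "orthogonal_transformation (refl a)"
proof -
  have "linear (refl a)"
    unfolding refl_def
    by (intro linearI) (auto simp: inner_add_left algebra_simps add_divide_distrib diff_divide_distrib)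
  moreover have "refl a x \<bullet> refl a y = x \<bullet> y" for x y
  proof (cases "a = 0")
    case False
    then have "a \<bullet> a \<noteq> 0" by simp
    then show ?thesis
      unfolding refl_def by (simp add: inner_diff_left inner_diff_right inner_commute field_simps)
  qed (simp add: refl_def)
  ultimately show ?thesis unfolding orthogonal_transformation_def by blast
qed

lemma linear_refl: "linear (refl a)"
  using orthogonal_transformation_refl orthogonal_transformation_linear by blast

lemma refl_self: "a \<noteq> 0 \<Longrightarrow> refl a a = - a"
  unfolding refl_def by (simp add: scaleR_2 algebra_simps)

lemma refl_refl [simp]: "refl a (refl a x) = x"
proof (cases "a = 0")
  case False
  then have "refl a x \<bullet> a = - (x \<bullet> a)"
    unfolding refl_def by (simp add: inner_diff_left)
  then show ?thesis
    unfolding refl_def[of a "refl a x"] by (simp add: refl_def algebra_simps)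
qed (simp add: refl_def)

lemma refl_comp_refl: "refl a \<circ> refl a = id"
  by (rule ext) simp

lemma refl_commute: "a \<bullet> b = 0 \<Longrightarrow> refl a (refl b x) = refl b (refl a x)"
  unfolding refl_def by (simp add: inner_diff_left inner_commute algebra_simps)

lemma refl_conjugate:
  assumes "orthogonal_transformation w"
  shows "refl (w a) (w x) = w (refl a x)"
  using assms unfolding orthogonal_transformation_def refl_def
  by (simp add: linear_diff linear_scale)

lemma refl_fixed: "x \<bullet> a = 0 \<Longrightarrow> refl a x = x"
  unfolding refl_def by simp

lemma refl_minus_self: "x - refl a x = ((2 * (x \<bullet> a)) / (a \<bullet> a)) *\<^sub>R a"
  unfolding refl_def by simp

lemma in_span_if_refl_displacement:
  assumes "y - refl a y \<in> span S" "y \<bullet> a \<noteq> 0"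
  shows "a \<in> span S"
proof -
  define c where "c = (2 * (y \<bullet> a)) / (a \<bullet> a)"
  have "a \<noteq> 0" using assms(2) by auto
  then have "c \<noteq> 0" unfolding c_def using assms(2) by simp
  then have "a = (1 / c) *\<^sub>R (y - refl a y)"
    unfolding refl_minus_self c_def[symmetric] by simp
  also have "\<dots> \<in> span S" using assms(1) by (rule span_scale)
  finally show ?thesis .
qed

definition refl_word :: "(nat \<Rightarrow> 'a::euclidean_space) \<Rightarrow> nat list \<Rightarrow> 'a \<Rightarrow> 'a" where
  "refl_word alpha js = foldr (\<lambda>j f. refl (alpha j) \<circ> f) js id"

lemma refl_word_Nil [simp]: "refl_word alpha [] = id"
  unfolding refl_word_def by simp

lemma refl_word_Cons [simp]: "refl_word alpha (j # js) = refl (alpha j) \<circ> refl_word alpha js"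
  unfolding refl_word_def by simp

lemma refl_word_append: "refl_word alpha (xs @ ys) = refl_word alpha xs \<circ> refl_word alpha ys"
  by (induction xs) (auto simp: comp_assoc)

lemma refl_word_snoc: "refl_word alpha (xs @ [j]) = refl_word alpha xs \<circ> refl (alpha j)"
  by (simp add: refl_word_append)

lemma orthogonal_transformation_refl_word: "orthogonal_transformation (refl_word alpha js)"
proof (induction js)
  case Nil
  show ?case by (simp add: id_def)
next
  case (Cons j js)
  then show ?case
    by (simp only: refl_word_Cons orthogonal_transformation_compose orthogonal_transformation_refl)
qed

lemma refl_word_rev_inverse: "refl_word alpha (rev js) \<circ> refl_word alpha js = id"
proof (induction js)
  case (Cons j js)
  have "refl_word alpha (rev (j # js)) \<circ> refl_word alpha (j # js)
      = refl_word alpha (rev js) \<circ> (refl (alpha j) \<circ> refl (alpha j)) \<circ> refl_word alpha js"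
    by (simp add: refl_word_snoc comp_assoc)
  also have "\<dots> = id" by (simp only: refl_comp_refl comp_id Cons.IH)
  finally show ?case .
qed simp

lemma weyl_sub_iff_refl_word:
  "w \<in> weyl_sub alpha J \<longleftrightarrow> (\<exists>js. set js \<subseteq> J \<and> w = refl_word alpha js)"
proof
  assume "w \<in> weyl_sub alpha J"
  then show "\<exists>js. set js \<subseteq> J \<and> w = refl_word alpha js"
  proof induction
    case id
    show ?case by (intro exI[of _ "[]"]) simp
  next
    case (step w j)
    then obtain js where "set js \<subseteq> J" "w = refl_word alpha js" by blast
    then show ?case using step by (intro exI[of _ "j # js"]) simp
  qed
next
  have "set js \<subseteq> J \<Longrightarrow> refl_word alpha js \<in> weyl_sub alpha J" for js
    by (induction js) (auto intro: weyl_sub.intros)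
  then show "\<exists>js. set js \<subseteq> J \<and> w = refl_word alpha js \<Longrightarrow> w \<in> weyl_sub alpha J" by blast
qed

lemma refl_word_in_weyl_sub: "set js \<subseteq> J \<Longrightarrow> refl_word alpha js \<in> weyl_sub alpha J"
  using weyl_sub_iff_refl_word by blast

lemma orthogonal_transformation_weyl_sub:
  "w \<in> weyl_sub alpha J \<Longrightarrow> orthogonal_transformation w"
  using weyl_sub_iff_refl_word orthogonal_transformation_refl_word by metis

lemma linear_weyl_sub: "w \<in> weyl_sub alpha J \<Longrightarrow> linear w"
  using orthogonal_transformation_weyl_sub orthogonal_transformation_linear by blast

lemma inner_weyl_sub: "w \<in> weyl_sub alpha J \<Longrightarrow> w x \<bullet> w y = x \<bullet> y"
  using orthogonal_transformation_weyl_sub orthogonal_transformation_def by blast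

lemma weyl_sub_mono: "J \<subseteq> K \<Longrightarrow> weyl_sub alpha J \<subseteq> weyl_sub alpha K"
  by (rule subsetI) (metis weyl_sub_iff_refl_word order_trans)

lemma weyl_sub_comp:
  "v \<in> weyl_sub alpha J \<Longrightarrow> w \<in> weyl_sub alpha J \<Longrightarrow> v \<circ> w \<in> weyl_sub alpha J"
  using weyl_sub_iff_refl_word[of _ alpha J] refl_word_append[of alpha]
  by (metis Un_subset_iff set_append)

lemma weyl_sub_inverse:
  assumes "v \<in> weyl_sub alpha J"
  obtains v' where "v' \<in> weyl_sub alpha J" "v' \<circ> v = id" "v \<circ> v' = id"
proof -
  obtain xs where "set xs \<subseteq> J" "v = refl_word alpha xs"
    using assms weyl_sub_iff_refl_word by metis
  then show ?thesis
    using that refl_word_in_weyl_sub[of "rev xs" J alpha]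
      refl_word_rev_inverse[of alpha xs] refl_word_rev_inverse[of alpha "rev xs"] by auto
qed

lemma refl_in_weyl_sub: "j \<in> J \<Longrightarrow> refl (alpha j) \<in> weyl_sub alpha J"
  using weyl_sub.step[OF weyl_sub.id, of j J alpha] by simp

lemma weyl_sub_commute:
  assumes "\<And>j. j \<in> J \<Longrightarrow> alpha j \<bullet> a = 0" and "v \<in> weyl_sub alpha J"
  shows "refl a (v x) = v (refl a x)"
  using assms(2)
proof induction
  case (step w j)
  then show ?case using refl_commute[of a "alpha j" "w x"] assms(1) by (simp add: inner_commute)
qed simp

lemma weyl_sub_minus_in_span: "w \<in> weyl_sub alpha J \<Longrightarrow> x - w x \<in> span (alpha ` J)"
proof (induction rule: weyl_sub.induct)
  case (step w j)
  have "x - (refl (alpha j) \<circ> w) x = (x - w x) + (w x - refl (alpha j) (w x))" by simp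
  also have "\<dots> \<in> span (alpha ` J)"
    unfolding refl_minus_self using step by (intro span_add[OF step.IH] span_scale span_base) auto
  finally show ?case .
qed (simp add: span_zero)

definition reduced_word :: "(nat \<Rightarrow> 'a::euclidean_space) \<Rightarrow> nat set \<Rightarrow> nat list \<Rightarrow> bool" where
  "reduced_word alpha J js \<longleftrightarrow> set js \<subseteq> J \<and>
     (\<forall>ks. set ks \<subseteq> J \<and> refl_word alpha ks = refl_word alpha js \<longrightarrow> length js \<le> length ks)"

lemma reduced_word_exists:
  assumes "w \<in> weyl_sub alpha J"
  obtains js where "reduced_word alpha J js" "refl_word alpha js = w"
proof -
  obtain js0 where "set js0 \<subseteq> J \<and> refl_word alpha js0 = w"
    using assms weyl_sub_iff_refl_word by metis
  from ex_has_least_nat[of "\<lambda>js. set js \<subseteq> J \<and> refl_word alpha js = w", OF this, of length]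
  show ?thesis using that unfolding reduced_word_def by metis
qed

lemma reduced_word_prefix: "reduced_word alpha J (xs @ ys) \<Longrightarrow> reduced_word alpha J xs"
  unfolding reduced_word_def
  by (metis (no_types, lifting) Un_subset_iff add_le_cancel_right length_append refl_word_append
      set_append)

lemma weyl_length_le: "set js \<subseteq> J \<Longrightarrow> weyl_length alpha J (refl_word alpha js) \<le> length js"
  unfolding weyl_length_def refl_word_def by (rule Least_le) blast

lemma weyl_length_reduced_word:
  "reduced_word alpha J js \<Longrightarrow> weyl_length alpha J (refl_word alpha js) = length js"
  unfolding weyl_length_def
  by (rule Least_equality) (auto simp: reduced_word_def refl_word_def)

section \<open>Coordinates with respect to a base\<close>

locale simple_roots =
  fixes Phi :: "'a::euclidean_space set" and alpha :: "nat \<Rightarrow> 'a" and n :: nat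
  assumes root_system: "root_system Phi" and base: "is_base Phi alpha n"
begin

lemma finite_roots: "finite Phi"
  and zero_not_root: "0 \<notin> Phi"
  and span_roots: "span Phi = UNIV"
  and refl_roots: "a \<in> Phi \<Longrightarrow> refl a ` Phi = Phi"
  and cartan_integer: "a \<in> Phi \<Longrightarrow> b \<in> Phi \<Longrightarrow> (2 * (b \<bullet> a)) / (a \<bullet> a) \<in> \<int>"
  and roots_reduced: "a \<in> Phi \<Longrightarrow> c *\<^sub>R a \<in> Phi \<Longrightarrow> c = 1 \<or> c = -1"
  using root_system unfolding root_system_def by auto

lemma inj_on_alpha: "inj_on alpha {1..n}"
  and alpha_root: "i \<in> {1..n} \<Longrightarrow> alpha i \<in> Phi"
  and independent_alpha: "independent (alpha ` {1..n})"
  and root_integer_coefs: "b \<in> Phi \<Longrightarrow> \<exists>c::nat \<Rightarrow> int. b = (\<Sum>i=1..n. of_int (c i) *\<^sub>R alpha i) \<and>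
        ((\<forall>i. c i \<ge> 0) \<or> (\<forall>i. c i \<le> 0))"
  using base unfolding is_base_def by auto

lemma inner_alpha_self_pos: "i \<in> {1..n} \<Longrightarrow> alpha i \<bullet> alpha i > 0"
  using alpha_root zero_not_root by fastforce

lemma span_alpha: "span (alpha ` {1..n}) = UNIV"
proof -
  have "Phi \<subseteq> span (alpha ` {1..n})"
  proof
    fix b assume "b \<in> Phi"
    then obtain c :: "nat \<Rightarrow> int" where b: "b = (\<Sum>i=1..n. of_int (c i) *\<^sub>R alpha i)"
      using root_integer_coefs by blast
    show "b \<in> span (alpha ` {1..n})"
      unfolding b by (intro span_sum span_scale span_base) auto
  qed
  then show ?thesis using span_roots span_minimal[of Phi] by auto
qed

lemma sum_alpha_eq_0_imp:
  assumes "(\<Sum>j=1..n. c j *\<^sub>R alpha j) = 0" "i \<in> {1..n}"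
  shows "c i = 0"
proof -
  let ?u = "\<lambda>v. c (the_inv_into {1..n} alpha v)"
  have "(\<Sum>v\<in>alpha ` {1..n}. ?u v *\<^sub>R v) = (\<Sum>j=1..n. ?u (alpha j) *\<^sub>R alpha j)"
    by (subst sum.reindex[OF inj_on_alpha]) auto
  also have "\<dots> = (\<Sum>j=1..n. c j *\<^sub>R alpha j)"
    by (rule sum.cong[OF refl]) (simp only: the_inv_into_f_f[OF inj_on_alpha])
  finally have "(\<Sum>v\<in>alpha ` {1..n}. ?u v *\<^sub>R v) = 0" using assms(1) by simp
  moreover have "\<forall>t u v. finite t \<longrightarrow> t \<subseteq> alpha ` {1..n} \<longrightarrow> (\<Sum>v\<in>t. u v *\<^sub>R v) = 0
      \<longrightarrow> v \<in> t \<longrightarrow> u v = 0"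
    using independent_alpha unfolding independent_explicit_module by blast
  ultimately have "?u (alpha i) = 0" using assms(2) by (meson finite_atLeastAtMost finite_imageI imageI order_refl)
  then show ?thesis by (metis the_inv_into_f_f[OF inj_on_alpha assms(2)])
qed

lemma sum_alpha_eq_imp:
  assumes "(\<Sum>j=1..n. c j *\<^sub>R alpha j) = (\<Sum>j=1..n. d j *\<^sub>R alpha j)" "i \<in> {1..n}"
  shows "c i = d i"
  using sum_alpha_eq_0_imp[of "\<lambda>j. c j - d j" i] assms
  by (simp add: scaleR_diff_left sum_subtractf)

lemma coef_spec:
  "x = (\<Sum>j=1..n. coef alpha n x j *\<^sub>R alpha j) \<and> (\<forall>j. j \<notin> {1..n} \<longrightarrow> coef alpha n x j = 0)"
proof -
  have "x \<in> span (alpha ` {1..n})" using span_alpha by auto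
  then obtain u where u: "x = (\<Sum>v\<in>alpha ` {1..n}. u v *\<^sub>R v)"
    using span_finite[of "alpha ` {1..n}"] by auto
  define c where "c j = (if j \<in> {1..n} then u (alpha j) else 0)" for j
  have "x = (\<Sum>j=1..n. u (alpha j) *\<^sub>R alpha j)"
    unfolding u by (subst sum.reindex[OF inj_on_alpha]) auto
  also have "\<dots> = (\<Sum>j=1..n. c j *\<^sub>R alpha j)" by (intro sum.cong refl) (simp add: c_def)
  finally have "x = (\<Sum>j=1..n. c j *\<^sub>R alpha j)" .
  then have c: "x = (\<Sum>j=1..n. c j *\<^sub>R alpha j) \<and> (\<forall>j. j \<notin> {1..n} \<longrightarrow> c j = 0)"
    by (simp add: c_def)
  show ?thesis unfolding coef_def
  proof (rule theI[of _ c])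
    show "x = (\<Sum>j=1..n. c j *\<^sub>R alpha j) \<and> (\<forall>j. j \<notin> {1..n} \<longrightarrow> c j = 0)" by (rule c)
  next
    fix d assume d: "x = (\<Sum>j=1..n. d j *\<^sub>R alpha j) \<and> (\<forall>j. j \<notin> {1..n} \<longrightarrow> d j = 0)"
    show "d = c"
    proof
      fix j
      show "d j = c j"
        using c d sum_alpha_eq_imp[of d c j] by (cases "j \<in> {1..n}") auto
    qed
  qed
qed

lemma sum_coef: "(\<Sum>j=1..n. coef alpha n x j *\<^sub>R alpha j) = x"
  using coef_spec by metis

lemma coef_outside: "j \<notin> {1..n} \<Longrightarrow> coef alpha n x j = 0"
  using coef_spec by blast

lemma coef_eqI: "x = (\<Sum>j=1..n. c j *\<^sub>R alpha j) \<Longrightarrow> j \<in> {1..n} \<Longrightarrow> coef alpha n x j = c j"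
  using sum_alpha_eq_imp[of "coef alpha n x" c j] sum_coef[of x] by simp

lemma linear_coef: "linear (\<lambda>x. coef alpha n x j)"
proof (cases "j \<in> {1..n}")
  case True
  show ?thesis
  proof (rule linearI)
    fix x y
    have "x + y = (\<Sum>i=1..n. (coef alpha n x i + coef alpha n y i) *\<^sub>R alpha i)"
      by (subst (1 2) sum_coef[symmetric]) (simp add: scaleR_add_left sum.distrib)
    from coef_eqI[OF this True]
    show "coef alpha n (x + y) j = coef alpha n x j + coef alpha n y j" .
  next
    fix r x
    have "r *\<^sub>R x = (\<Sum>i=1..n. (r * coef alpha n x i) *\<^sub>R alpha i)"
      by (subst sum_coef[symmetric]) (simp add: scaleR_sum_right)
    from coef_eqI[OF this True]
    show "coef alpha n (r *\<^sub>R x) j = r *\<^sub>R coef alpha n x j" by simp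
  qed
qed (simp add: coef_outside linear_zero)

lemma coef_add: "coef alpha n (x + y) j = coef alpha n x j + coef alpha n y j"
  by (rule linear_add[OF linear_coef])

lemma coef_diff: "coef alpha n (x - y) j = coef alpha n x j - coef alpha n y j"
  by (rule linear_diff[OF linear_coef])

lemma coef_uminus: "coef alpha n (- x) j = - coef alpha n x j"
  by (rule linear_neg[OF linear_coef])

lemma coef_scaleR: "coef alpha n (r *\<^sub>R x) j = r * coef alpha n x j"
  using linear_scale[OF linear_coef] by simp

lemma coef_sum: "coef alpha n (\<Sum>x\<in>S. f x) j = (\<Sum>x\<in>S. coef alpha n (f x) j)"
  by (rule linear_sum[OF linear_coef])

lemma coef_alpha: "i \<in> {1..n} \<Longrightarrow> coef alpha n (alpha i) j = (if j = i then 1 else 0)"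
proof (cases "j \<in> {1..n}")
  case True
  assume i: "i \<in> {1..n}"
  have "(\<Sum>k=1..n. (if k = i then 1 else 0) *\<^sub>R alpha k) = (\<Sum>k=1..n. if k = i then alpha k else 0)"
    by (intro sum.cong) auto
  then have "alpha i = (\<Sum>k=1..n. (if k = i then 1 else 0) *\<^sub>R alpha k)"
    using i by simp
  from coef_eqI[OF this True] show ?thesis by simp
qed (auto simp: coef_outside)

lemma coef_refl_alpha:
  "i \<in> {1..n} \<Longrightarrow> coef alpha n (refl (alpha i) x) j =
     coef alpha n x j - (if j = i then (2 * (x \<bullet> alpha i)) / (alpha i \<bullet> alpha i) else 0)"
  unfolding refl_def by (simp add: coef_diff coef_scaleR coef_alpha)

lemma coef_span_outside:
  assumes "y \<in> span (alpha ` J)" and "J \<subseteq> {1..n}" and "i \<notin> J"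
  shows "coef alpha n y i = 0"
proof -
  have "finite (alpha ` J)" using assms(2) finite_subset by blast
  then obtain u where u: "y = (\<Sum>v\<in>alpha ` J. u v *\<^sub>R v)"
    using assms(1) span_finite by blast
  have "coef alpha n v i = 0" if "v \<in> alpha ` J" for v
  proof -
    obtain j where "j \<in> J" "v = alpha j" using \<open>v \<in> alpha ` J\<close> by blast
    then show ?thesis using assms(2,3) coef_alpha[of j i] by auto
  qed
  then show ?thesis unfolding u by (simp add: coef_sum coef_scaleR)
qed

lemma coef_weyl_sub_outside:
  "w \<in> weyl_sub alpha J \<Longrightarrow> J \<subseteq> {1..n} \<Longrightarrow> i \<notin> J \<Longrightarrow> coef alpha n (w x) i = coef alpha n x i"
  using coef_span_outside[OF weyl_sub_minus_in_span] coef_diff by (metis eq_iff_diff_eq_0)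

section \<open>Positive roots and the longest element\<close>

definition nonneg_coefs :: "'a \<Rightarrow> bool" where
  "nonneg_coefs x \<longleftrightarrow> (\<forall>i\<in>{1..n}. 0 \<le> coef alpha n x i)"

lemma nonneg_coefs_0: "nonneg_coefs 0"
  unfolding nonneg_coefs_def using coef_scaleR[of 0 0] by simp

lemma nonneg_coefs_add: "nonneg_coefs x \<Longrightarrow> nonneg_coefs y \<Longrightarrow> nonneg_coefs (x + y)"
  unfolding nonneg_coefs_def by (simp add: coef_add)

lemma nonneg_coefs_scaleR: "nonneg_coefs x \<Longrightarrow> 0 \<le> c \<Longrightarrow> nonneg_coefs (c *\<^sub>R x)"
  unfolding nonneg_coefs_def by (simp add: coef_scaleR)

lemma nonneg_coefs_sum: "(\<And>j. j \<in> A \<Longrightarrow> nonneg_coefs (f j)) \<Longrightarrow> nonneg_coefs (sum f A)"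
  unfolding nonneg_coefs_def by (simp add: coef_sum sum_nonneg)

lemma nonneg_coefs_alpha: "i \<in> {1..n} \<Longrightarrow> nonneg_coefs (alpha i)"
  unfolding nonneg_coefs_def by (simp add: coef_alpha)

lemma convex_nonneg_coefs_above: "convex {y. nonneg_coefs (y - c)}"
proof (rule convexI)
  fix x y :: 'a and u v :: real
  assume "x \<in> {y. nonneg_coefs (y - c)}" "y \<in> {y. nonneg_coefs (y - c)}" "0 \<le> u" "0 \<le> v" "u + v = 1"
  moreover have "u *\<^sub>R x + v *\<^sub>R y - c = u *\<^sub>R (x - c) + v *\<^sub>R (y - c)" if "u + v = 1"
    using that by (simp add: algebra_simps flip: scaleR_add_left)
  ultimately show "u *\<^sub>R x + v *\<^sub>R y \<in> {y. nonneg_coefs (y - c)}"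
    by (simp add: nonneg_coefs_add nonneg_coefs_scaleR)
qed

lemma inner_nonneg_if_nonneg_coefs:
  assumes "nonneg_coefs b" and "\<And>i. i \<in> L \<Longrightarrow> 0 \<le> z \<bullet> alpha i"
    and "\<And>i. i \<in> {1..n} \<Longrightarrow> i \<notin> L \<Longrightarrow> coef alpha n b i = 0"
  shows "0 \<le> z \<bullet> b"
proof -
  have "z \<bullet> b = (\<Sum>i=1..n. coef alpha n b i * (z \<bullet> alpha i))"
    by (subst sum_coef[of b, symmetric]) (simp add: inner_sum_right)
  also have "\<dots> \<ge> 0"
  proof (rule sum_nonneg)
    fix i assume "i \<in> {1..n}"
    then show "0 \<le> coef alpha n b i * (z \<bullet> alpha i)"
      using assms unfolding nonneg_coefs_def by (cases "i \<in> L") auto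
  qed
  finally show ?thesis .
qed

lemma root_sign: "b \<in> Phi \<Longrightarrow> nonneg_coefs b \<or> nonneg_coefs (- b)"
proof -
  assume "b \<in> Phi"
  then obtain c :: "nat \<Rightarrow> int" where c: "b = (\<Sum>i=1..n. of_int (c i) *\<^sub>R alpha i)"
     "(\<forall>i. c i \<ge> 0) \<or> (\<forall>i. c i \<le> 0)" using root_integer_coefs by blast
  then show ?thesis using coef_eqI[OF c(1)] unfolding nonneg_coefs_def by (auto simp: coef_uminus)
qed

lemma root_not_nonneg_and_nonpos:
  assumes "b \<in> Phi" "nonneg_coefs b" "nonneg_coefs (- b)"
  shows False
proof -
  have "\<forall>i\<in>{1..n}. coef alpha n b i = 0"
    using assms(2,3) unfolding nonneg_coefs_def by (force simp: coef_uminus)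
  then have "b = 0" using sum_coef[of b] by simp
  then show False using assms(1) zero_not_root by simp
qed

lemma refl_alpha_sign_change:
  assumes i: "i \<in> {1..n}" and b: "b \<in> Phi" "nonneg_coefs b"
    and neg: "nonneg_coefs (- refl (alpha i) b)"
  shows "b = alpha i"
proof -
  have "coef alpha n b j = 0" if "j \<in> {1..n}" "j \<noteq> i" for j
    using that b(2) neg coef_refl_alpha[OF i, of b j]
    unfolding nonneg_coefs_def by (force simp: coef_uminus)
  then have "b = (\<Sum>j=1..n. if j = i then coef alpha n b i *\<^sub>R alpha i else 0)"
    by (subst sum_coef[of b, symmetric], intro sum.cong) auto
  also have "\<dots> = coef alpha n b i *\<^sub>R alpha i" using i by simp
  finally have bi: "b = coef alpha n b i *\<^sub>R alpha i" .
  then have "coef alpha n b i = 1 \<or> coef alpha n b i = -1"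
    using roots_reduced[OF alpha_root[OF i]] b(1) by metis
  moreover have "coef alpha n b i \<ge> 0" using b(2) i unfolding nonneg_coefs_def by blast
  ultimately show ?thesis using bi by auto
qed

lemma refl_word_root: "set js \<subseteq> {1..n} \<Longrightarrow> b \<in> Phi \<Longrightarrow> refl_word alpha js b \<in> Phi"
proof (induction js)
  case (Cons j js)
  then have "refl_word alpha js b \<in> Phi" "alpha j \<in> Phi" using alpha_root by auto
  then show ?case using refl_roots by auto
qed simp

lemma weyl_sub_root: "w \<in> weyl_sub alpha J \<Longrightarrow> J \<subseteq> {1..n} \<Longrightarrow> b \<in> Phi \<Longrightarrow> w b \<in> Phi"
  using weyl_sub_iff_refl_word refl_word_root by (metis order_trans)

lemma refl_word_deletion:
  assumes "set js \<subseteq> {1..n}" "j \<in> {1..n}" "nonneg_coefs (- refl_word alpha js (alpha j))"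
  obtains js' where "set js' \<subseteq> set js" "Suc (length js') = length js"
    "refl_word alpha js \<circ> refl (alpha j) = refl_word alpha js'"
  using assms
proof (induction js arbitrary: thesis)
  case Nil
  then show ?case using root_not_nonneg_and_nonpos[OF alpha_root nonneg_coefs_alpha] by auto
next
  case (Cons i rest)
  have i: "i \<in> {1..n}" and rest: "set rest \<subseteq> {1..n}" using Cons.prems by auto
  define b where "b = refl_word alpha rest (alpha j)"
  have b: "b \<in> Phi" unfolding b_def using refl_word_root[OF rest alpha_root[OF Cons.prems(3)]] .
  show ?case
  proof (cases "nonneg_coefs (- b)")
    case True
    then obtain js' where js': "set js' \<subseteq> set rest" "Suc (length js') = length rest"
      "refl_word alpha rest \<circ> refl (alpha j) = refl_word alpha js'"
      using Cons.IH[OF _ rest Cons.prems(3)] unfolding b_def by blast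
    then have "refl_word alpha (i # rest) \<circ> refl (alpha j) = refl_word alpha (i # js')"
      by (simp only: refl_word_Cons comp_assoc js'(3))
    moreover have "set (i # js') \<subseteq> set (i # rest)" "Suc (length (i # js')) = length (i # rest)"
      using js' by auto
    ultimately show ?thesis using Cons.prems(1) by blast
  next
    case False
    then have "nonneg_coefs b" using root_sign[OF b] by blast
    moreover have "nonneg_coefs (- refl (alpha i) b)" using Cons.prems(4) unfolding b_def by simp
    ultimately have "b = alpha i" using refl_alpha_sign_change[OF i b] by blast
    \<comment> \<open>so the first letter is conjugate to the deleted one: s_i w = w s_j\<close>
    then have "refl (alpha i) \<circ> refl_word alpha rest = refl_word alpha rest \<circ> refl (alpha j)"
      unfolding b_def
      using refl_conjugate[OF orthogonal_transformation_refl_word[of alpha rest], of "alpha j"]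
      by (auto simp: fun_eq_iff)
    then have "refl_word alpha (i # rest) \<circ> refl (alpha j) = refl_word alpha rest"
      by (simp add: comp_assoc refl_comp_refl)
    moreover have "set rest \<subseteq> set (i # rest)" "Suc (length rest) = length (i # rest)" by auto
    ultimately show ?thesis using Cons.prems(1) by blast
  qed
qed

lemma reduced_word_last_positive:
  assumes r: "reduced_word alpha J (xs @ [j])" and J: "J \<subseteq> {1..n}"
  shows "nonneg_coefs (refl_word alpha xs (alpha j))"
proof (rule ccontr)
  assume "\<not> nonneg_coefs (refl_word alpha xs (alpha j))"
  moreover have xs: "set xs \<subseteq> {1..n}" and j: "j \<in> {1..n}"
    using r J unfolding reduced_word_def by auto
  ultimately have "nonneg_coefs (- refl_word alpha xs (alpha j))"
    using root_sign[OF refl_word_root[OF xs alpha_root[OF j]]] by blast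
  then obtain js' where js': "set js' \<subseteq> set xs" "Suc (length js') = length xs"
    "refl_word alpha xs \<circ> refl (alpha j) = refl_word alpha js'"
    using refl_word_deletion[OF xs j] by blast
  have "set js' \<subseteq> J" using js'(1) r unfolding reduced_word_def by auto
  moreover have "refl_word alpha js' = refl_word alpha (xs @ [j])" using js'(3) by (simp add: refl_word_snoc)
  ultimately have "length (xs @ [j]) \<le> length js'" using r unfolding reduced_word_def by blast
  then show False using js'(2) by simp
qed

definition dominant :: "'a \<Rightarrow> bool" where
  "dominant x \<longleftrightarrow> (\<forall>i\<in>{1..n}. 0 \<le> x \<bullet> alpha i)"

lemma dominant_minus_reduced_word_nonneg:
  "reduced_word alpha J js \<Longrightarrow> J \<subseteq> {1..n} \<Longrightarrow> dominant x \<Longrightarrow>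
    nonneg_coefs (x - refl_word alpha js x)"
proof (induction js rule: rev_induct)
  case Nil
  then show ?case by (simp add: nonneg_coefs_0)
next
  case (snoc j xs)
  have j: "j \<in> {1..n}" using snoc.prems unfolding reduced_word_def by auto
  have "x - refl_word alpha (xs @ [j]) x = (x - refl_word alpha xs x) + refl_word alpha xs (x - refl (alpha j) x)"
    by (simp add: refl_word_snoc linear_diff[OF orthogonal_transformation_linear[OF
          orthogonal_transformation_refl_word]])
  also have "\<dots> = (x - refl_word alpha xs x) + ((2 * (x \<bullet> alpha j)) / (alpha j \<bullet> alpha j)) *\<^sub>R refl_word alpha xs (alpha j)"
    by (simp add: refl_minus_self orthogonal_transformation_scaleR[OF orthogonal_transformation_refl_word])
  finally have eq: "x - refl_word alpha (xs @ [j]) x = (x - refl_word alpha xs x) +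
      ((2 * (x \<bullet> alpha j)) / (alpha j \<bullet> alpha j)) *\<^sub>R refl_word alpha xs (alpha j)" .
  have "0 \<le> (2 * (x \<bullet> alpha j)) / (alpha j \<bullet> alpha j)"
    using snoc.prems(3) j inner_alpha_self_pos[OF j] unfolding dominant_def by auto
  then show ?case
    unfolding eq using snoc reduced_word_prefix reduced_word_last_positive
    by (blast intro: nonneg_coefs_add nonneg_coefs_scaleR)
qed

lemma dominant_minus_weyl_nonneg:
  "w \<in> weyl_sub alpha J \<Longrightarrow> J \<subseteq> {1..n} \<Longrightarrow> dominant x \<Longrightarrow> nonneg_coefs (x - w x)"
  by (metis reduced_word_exists dominant_minus_reduced_word_nonneg)

lemma weyl_length_less_refl:
  assumes J: "J \<subseteq> {1..n}" and w: "w \<in> weyl_sub alpha J" and j: "j \<in> J"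
    and pos: "nonneg_coefs (w (alpha j))"
  shows "weyl_length alpha J w < weyl_length alpha J (w \<circ> refl (alpha j))"
proof -
  obtain ks where ks: "reduced_word alpha J ks" "refl_word alpha ks = w \<circ> refl (alpha j)"
    using reduced_word_exists[OF weyl_sub_comp[OF w refl_in_weyl_sub[OF j]]] by blast
  have ksJ: "set ks \<subseteq> {1..n}" using ks J unfolding reduced_word_def by auto
  have j1: "j \<in> {1..n}" using j J by auto
  have "alpha j \<noteq> 0" using alpha_root[OF j1] zero_not_root by auto
  then have "refl_word alpha ks (alpha j) = - w (alpha j)"
    using ks(2) refl_self[of "alpha j"] linear_neg[OF linear_weyl_sub[OF w]] by (simp add: fun_eq_iff)
  then obtain ks' where ks': "set ks' \<subseteq> set ks" "Suc (length ks') = length ks"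
      "refl_word alpha ks \<circ> refl (alpha j) = refl_word alpha ks'"
    using refl_word_deletion[OF ksJ j1] pos by auto
  have "refl_word alpha ks' = w" using ks'(3) ks(2) by (simp add: comp_assoc refl_comp_refl)
  then have "weyl_length alpha J w \<le> length ks'"
    using weyl_length_le[of ks' J alpha] ks'(1) ks(1) unfolding reduced_word_def by auto
  then show ?thesis using weyl_length_reduced_word[OF ks(1)] ks ks'(2) by simp
qed

lemma longest_elem_negates_alpha:
  assumes J: "J \<subseteq> {1..n}" and u: "longest_elem alpha J u" and j: "j \<in> J"
  shows "nonneg_coefs (- u (alpha j))"
proof (rule ccontr)
  assume "\<not> nonneg_coefs (- u (alpha j))"
  moreover have uJ: "u \<in> weyl_sub alpha J" using u unfolding longest_elem_def by blast
  moreover have "u (alpha j) \<in> Phi" using weyl_sub_root[OF uJ J alpha_root] j J by auto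
  ultimately have "weyl_length alpha J u < weyl_length alpha J (u \<circ> refl (alpha j))"
    using weyl_length_less_refl[OF J uJ j] root_sign by blast
  moreover have "u \<circ> refl (alpha j) \<in> weyl_sub alpha J"
    using weyl_sub_comp[OF uJ refl_in_weyl_sub[OF j]] .
  ultimately show False using u unfolding longest_elem_def by fastforce
qed

section \<open>Dominant conjugates, integrality and the weight polytope\<close>

lemma finite_weyl_sub:
  assumes J: "J \<subseteq> {1..n}"
  shows "finite (weyl_sub alpha J)"
proof -
  let ?r = "\<lambda>w. restrict w Phi"
  have "inj_on ?r (weyl_sub alpha J)"
  proof (rule inj_onI)
    fix v w assume v: "v \<in> weyl_sub alpha J" and w: "w \<in> weyl_sub alpha J" and "?r v = ?r w"
    then have "\<And>x. x \<in> Phi \<Longrightarrow> v x = w x" by (metis restrict_apply')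
    then show "v = w"
      using linear_eq_on[OF linear_weyl_sub[OF v] linear_weyl_sub[OF w]] span_roots by blast
  qed
  moreover have "?r ` weyl_sub alpha J \<subseteq> Phi \<rightarrow>\<^sub>E Phi"
    using weyl_sub_root[OF _ J] by auto
  then have "finite (?r ` weyl_sub alpha J)"
    using finite_roots by (meson finite_PiE finite_subset)
  ultimately show ?thesis using finite_imageD by blast
qed

definition height :: "'a \<Rightarrow> real" where
  "height z = (\<Sum>i=1..n. coef alpha n z i)"

lemma height_refl_alpha:
  assumes j: "j \<in> {1..n}"
  shows "height (refl (alpha j) z) = height z - (2 * (z \<bullet> alpha j)) / (alpha j \<bullet> alpha j)"
proof -
  have "height (refl (alpha j) z) = (\<Sum>i=1..n. coef alpha n z i -
      (if i = j then (2 * (z \<bullet> alpha j)) / (alpha j \<bullet> alpha j) else 0))"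
    unfolding height_def by (intro sum.cong refl) (simp add: coef_refl_alpha[OF j])
  also have "\<dots> = height z - (2 * (z \<bullet> alpha j)) / (alpha j \<bullet> alpha j)"
    unfolding height_def sum_subtractf using j by simp
  finally show ?thesis .
qed

text \<open>An element of maximal height in the orbit cannot be raised by any s_j, j \<in> L.\<close>
lemma weyl_sub_dominant_conjugate:
  assumes L: "L \<subseteq> {1..n}"
  obtains v where "v \<in> weyl_sub alpha L" "\<And>j. j \<in> L \<Longrightarrow> 0 \<le> v y \<bullet> alpha j"
proof -
  define orbit where "orbit = (\<lambda>v. v y) ` weyl_sub alpha L"
  have "finite orbit" "orbit \<noteq> {}"
    unfolding orbit_def using finite_weyl_sub[OF L] weyl_sub.id by auto
  then have "Max (height ` orbit) \<in> height ` orbit" by simp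
  then obtain z where z: "z \<in> orbit" and hz: "height z = Max (height ` orbit)" by (metis imageE)
  have max: "height z' \<le> height z" if "z' \<in> orbit" for z'
    unfolding hz using \<open>finite orbit\<close> that by simp
  obtain v where v: "v \<in> weyl_sub alpha L" and zv: "z = v y" using z unfolding orbit_def by blast
  have "0 \<le> z \<bullet> alpha j" if jL: "j \<in> L" for j
  proof (rule ccontr)
    assume neg: "\<not> 0 \<le> z \<bullet> alpha j"
    have j: "j \<in> {1..n}" using jL L by auto
    have "refl (alpha j) z \<in> orbit"
      unfolding orbit_def zv using weyl_sub.step[OF v jL] by (metis comp_apply image_eqI)
    moreover have "(2 * (z \<bullet> alpha j)) / (alpha j \<bullet> alpha j) < 0"
      using neg inner_alpha_self_pos[OF j] by (simp add: divide_neg_pos)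
    ultimately show False using max[of "refl (alpha j) z"] height_refl_alpha[OF j, of z] by simp
  qed
  then show ?thesis using that v zv by blast
qed

lemma weyl_conjugate_in_parabolic:
  assumes L: "L \<subseteq> {1..n}" and x: "dominant x" and w: "w \<in> weyl_sub alpha {1..n}"
    and eq: "\<And>i. i \<in> {1..n} \<Longrightarrow> i \<notin> L \<Longrightarrow> coef alpha n (w x) i = coef alpha n x i"
  shows "\<exists>v\<in>weyl_sub alpha L. w x = v x"
proof -
  obtain v where v: "v \<in> weyl_sub alpha L" and vd: "\<And>j. j \<in> L \<Longrightarrow> 0 \<le> v (w x) \<bullet> alpha j"
    using weyl_sub_dominant_conjugate[OF L] by metis
  define z where "z = v (w x)"
  define b where "b = x - z"
  have vw: "v \<circ> w \<in> weyl_sub alpha {1..n}"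
    using weyl_sub_comp[OF _ w] v weyl_sub_mono[OF L] by blast
  have "nonneg_coefs b"
    unfolding b_def z_def using dominant_minus_weyl_nonneg[OF vw _ x] by simp
  moreover have "coef alpha n b i = 0" if "i \<in> {1..n}" "i \<notin> L" for i
    unfolding b_def z_def using coef_weyl_sub_outside[OF v L that(2)] eq[OF that] coef_diff by simp
  ultimately have zb: "0 \<le> z \<bullet> b"
    using inner_nonneg_if_nonneg_coefs vd unfolding z_def by blast
  \<comment> \<open>x and z have the same norm, so x = z + b with z \<bullet> b \<ge> 0 forces b = 0\<close>
  have "z \<bullet> z = x \<bullet> x" unfolding z_def using inner_weyl_sub[OF vw, of x x] by simp
  also have "\<dots> = z \<bullet> z + 2 * (z \<bullet> b) + b \<bullet> b"
    unfolding b_def by (simp add: inner_diff_left inner_diff_right inner_commute)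
  finally have "b \<bullet> b \<le> 0" using zb by linarith
  then have "b = 0" by (metis inner_eq_zero_iff inner_ge_zero order_antisym)
  then have "v (w x) = x" unfolding b_def z_def by simp
  moreover obtain v' where "v' \<in> weyl_sub alpha L" "v' \<circ> v = id"
    using weyl_sub_inverse[OF v] by blast
  ultimately show ?thesis by (metis comp_apply id_apply)
qed

text \<open>Separate nu from the hull by a hyperplane a \<bullet> x = b. A conjugate v (- a) of -a is
  dominant, so its pairing with v nu is at most that with nu, which is at most that with lam;
  this contradicts the separation at the vertex v^-1 lam.\<close>
lemma dominant_below_in_weyl_hull:
  assumes lam: "dominant lam" and nu: "dominant nu" and le: "nonneg_coefs (lam - nu)"
  shows "nu \<in> convex hull ((\<lambda>w. w lam) ` weyl_sub alpha {1..n})"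
proof (rule ccontr)
  let ?S = "(\<lambda>w. w lam) ` weyl_sub alpha {1..n}"
  assume "nu \<notin> convex hull ?S"
  moreover have "closed (convex hull ?S)"
    using finite_weyl_sub[of "{1..n}"] by (simp add: compact_imp_closed finite_imp_compact_convex_hull)
  ultimately obtain a b where ab: "a \<bullet> nu < b" "\<forall>x\<in>convex hull ?S. b < a \<bullet> x"
    using separating_hyperplane_closed_point[OF convex_convex_hull] by blast
  obtain v where v: "v \<in> weyl_sub alpha {1..n}" and vd: "\<And>j. j \<in> {1..n} \<Longrightarrow> 0 \<le> v (- a) \<bullet> alpha j"
    using weyl_sub_dominant_conjugate[of "{1..n}" "- a"] by blast
  have dy: "dominant (v (- a))" unfolding dominant_def using vd by blast
  obtain v' where v': "v' \<in> weyl_sub alpha {1..n}" "v' \<circ> v = id"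
    using weyl_sub_inverse[OF v] by blast
  have "- a \<bullet> nu = v (- a) \<bullet> v nu" using inner_weyl_sub[OF v] by simp
  also have "\<dots> \<le> v (- a) \<bullet> nu"
    using inner_nonneg_if_nonneg_coefs[OF dominant_minus_weyl_nonneg[OF v _ nu], of "{1..n}"] dy
    unfolding dominant_def by (simp add: inner_diff_right)
  also have "\<dots> \<le> v (- a) \<bullet> lam"
    using inner_nonneg_if_nonneg_coefs[OF le, of "{1..n}"] dy
    unfolding dominant_def by (simp add: inner_diff_right)
  also have "\<dots> = - a \<bullet> v' lam"
    using inner_weyl_sub[OF v'(1), of "v (- a)" lam] v'(2) by (metis comp_apply id_apply)
  also have "\<dots> < - b"
    using ab(2) v'(1) by (simp add: hull_inc)
  finally show False using ab(1) by simp
qed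

definition int_coefs :: "'a \<Rightarrow> bool" where
  "int_coefs x \<longleftrightarrow> (\<forall>i\<in>{1..n}. coef alpha n x i \<in> \<int>)"

lemma int_coefs_add: "int_coefs x \<Longrightarrow> int_coefs y \<Longrightarrow> int_coefs (x + y)"
  unfolding int_coefs_def by (simp add: coef_add)

lemma int_coefs_diff: "int_coefs x \<Longrightarrow> int_coefs y \<Longrightarrow> int_coefs (x - y)"
  unfolding int_coefs_def by (simp add: coef_diff)

lemma int_coefs_scaleR_alpha: "c \<in> \<int> \<Longrightarrow> j \<in> {1..n} \<Longrightarrow> int_coefs (c *\<^sub>R alpha j)"
  unfolding int_coefs_def by (simp add: coef_scaleR coef_alpha)

lemma integral_weight_if_int_coefs:
  assumes "int_coefs y"
  shows "integral_weight alpha n y"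
  unfolding integral_weight_def
proof
  fix j assume j: "j \<in> {1..n}"
  have "y \<bullet> alpha j = (\<Sum>i=1..n. coef alpha n y i * (alpha i \<bullet> alpha j))"
    by (subst (1) sum_coef[of y, symmetric]) (simp add: inner_sum_left)
  then have "(2 * (y \<bullet> alpha j)) / (alpha j \<bullet> alpha j)
      = (\<Sum>i=1..n. coef alpha n y i * ((2 * (alpha i \<bullet> alpha j)) / (alpha j \<bullet> alpha j)))"
    by (simp add: sum_distrib_left sum_divide_distrib field_simps)
  also have "\<dots> \<in> \<int>"
    using assms cartan_integer[OF alpha_root[OF j] alpha_root] unfolding int_coefs_def
    by (intro Ints_sum Ints_mult) auto
  finally show "(2 * (y \<bullet> alpha j)) / (alpha j \<bullet> alpha j) \<in> \<int>" .
qed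

lemma integral_minus_weyl_int_coefs:
  assumes "w \<in> weyl_sub alpha J" "J \<subseteq> {1..n}" "integral_weight alpha n x"
  shows "int_coefs (x - w x)"
  using assms(1)
proof (induction rule: weyl_sub.induct)
  case id
  then show ?case unfolding int_coefs_def using coef_diff[of x x] by simp
next
  case (step w j)
  have j: "j \<in> {1..n}" using step assms(2) by auto
  have "(2 * (w x \<bullet> alpha j)) / (alpha j \<bullet> alpha j) =
     (2 * (x \<bullet> alpha j)) / (alpha j \<bullet> alpha j) - (2 * ((x - w x) \<bullet> alpha j)) / (alpha j \<bullet> alpha j)"
    by (simp add: diff_divide_distrib algebra_simps)
  also have "\<dots> \<in> \<int>"
    using assms(3) integral_weight_if_int_coefs[OF step.IH] j unfolding integral_weight_def
    by (intro Ints_diff) auto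
  finally have c: "(2 * (w x \<bullet> alpha j)) / (alpha j \<bullet> alpha j) \<in> \<int>" .
  have eq: "x - (refl (alpha j) \<circ> w) x = (x - w x) + ((2 * (w x \<bullet> alpha j)) / (alpha j \<bullet> alpha j)) *\<^sub>R alpha j"
    unfolding refl_def by simp
  show ?case unfolding eq using int_coefs_add[OF step.IH int_coefs_scaleR_alpha[OF c j]] .
qed

lemma wle_if_nonneg_int_coefs:
  assumes pos: "nonneg_coefs (y - x)" and int: "int_coefs (y - x)"
  shows "wle alpha n x y"
proof -
  define k where "k i = nat \<lfloor>coef alpha n (y - x) i\<rfloor>" for i
  have "coef alpha n (y - x) i = real (k i)" if "i \<in> {1..n}" for i
  proof -
    have "coef alpha n (y - x) i \<in> \<int>" "0 \<le> coef alpha n (y - x) i"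
      using pos int that unfolding nonneg_coefs_def int_coefs_def by auto
    then show ?thesis unfolding k_def by (auto elim!: Ints_cases)
  qed
  then have "(\<Sum>i=1..n. coef alpha n (y - x) i *\<^sub>R alpha i) = (\<Sum>i=1..n. of_nat (k i) *\<^sub>R alpha i)"
    by (intro sum.cong) auto
  then have "y - x = (\<Sum>i=1..n. of_nat (k i) *\<^sub>R alpha i)" by (simp only: sum_coef)
  then show ?thesis unfolding wle_def by blast
qed

lemma dominant_if_dominant_integral: "dominant_integral alpha n x \<Longrightarrow> dominant x"
  unfolding dominant_def
proof
  fix i assume "dominant_integral alpha n x" and i: "i \<in> {1..n}"
  then have "0 \<le> 2 * (x \<bullet> alpha i) / (alpha i \<bullet> alpha i)"
    unfolding dominant_integral_def by (metis Nats_cases of_nat_0_le_iff)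
  then show "0 \<le> x \<bullet> alpha i" using inner_alpha_self_pos[OF i] by (simp add: zero_le_divide_iff)
qed

lemma integral_if_dominant_integral: "dominant_integral alpha n x \<Longrightarrow> integral_weight alpha n x"
  unfolding dominant_integral_def integral_weight_def by (metis Nats_cases Ints_of_nat)

lemma longest_elem_negates_nonneg:
  assumes J: "J \<subseteq> {1..n}" and u: "longest_elem alpha J u"
    and b: "nonneg_coefs b" and supp: "\<And>j. j \<notin> J \<Longrightarrow> coef alpha n b j = 0"
  shows "nonneg_coefs (- u b)"
proof -
  have lin: "linear u" using u linear_weyl_sub unfolding longest_elem_def by blast
  have "- u b = (\<Sum>j=1..n. coef alpha n b j *\<^sub>R (- u (alpha j)))"
    by (subst sum_coef[of b, symmetric])
      (simp add: linear_sum[OF lin] linear_scale[OF lin] sum_negf)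
  also have "nonneg_coefs \<dots>"
  proof (rule nonneg_coefs_sum)
    fix j assume j: "j \<in> {1..n}"
    show "nonneg_coefs (coef alpha n b j *\<^sub>R (- u (alpha j)))"
    proof (cases "j \<in> J")
      case True
      have "0 \<le> coef alpha n b j" using b j unfolding nonneg_coefs_def by blast
      then show ?thesis by (rule nonneg_coefs_scaleR[OF longest_elem_negates_alpha[OF J u True]])
    next
      case False
      then show ?thesis using supp nonneg_coefs_0 by simp
    qed
  qed
  finally show ?thesis .
qed

lemma nonneg_int_coefs_if_wle:
  assumes "wle alpha n x y"
  shows "nonneg_coefs (y - x)" "int_coefs (y - x)"
proof -
  obtain c :: "nat \<Rightarrow> nat" where "y - x = (\<Sum>i=1..n. of_nat (c i) *\<^sub>R alpha i)"
    using assms unfolding wle_def by blast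
  from coef_eqI[OF this] show "nonneg_coefs (y - x)" "int_coefs (y - x)"
    unfolding nonneg_coefs_def int_coefs_def by simp_all
qed

lemma weights_in_weight_polytope:
  assumes lam: "dominant lam" and mu: "mu \<in> weights alpha n lam"
  shows "mu \<in> weight_polytope alpha n lam"
proof -
  let ?S = "(\<lambda>w. w lam) ` weyl_sub alpha {1..n}"
  obtain w nu where w: "w \<in> weyl_sub alpha {1..n}" and mu_eq: "mu = w nu"
    and nu: "dominant_integral alpha n nu" and le: "wle alpha n nu lam"
    using mu unfolding weights_def by blast
  have "nu \<in> convex hull ?S"
    using dominant_below_in_weyl_hull[OF lam dominant_if_dominant_integral[OF nu]]
      nonneg_int_coefs_if_wle[OF le] by blast
  then have "w nu \<in> convex hull (w ` ?S)"
    using convex_hull_linear_image[OF linear_weyl_sub[OF w]] by blast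
  also have "w ` ?S \<subseteq> ?S"
  proof
    fix y assume "y \<in> w ` ?S"
    then obtain v where "v \<in> weyl_sub alpha {1..n}" "y = (w \<circ> v) lam" by auto
    then show "y \<in> ?S" using weyl_sub_comp[OF w] by blast
  qed
  then have "convex hull (w ` ?S) \<subseteq> convex hull ?S" by (rule hull_mono)
  finally show ?thesis unfolding weight_polytope_def mu_eq .
qed

lemma int_coefs_minus_weight:
  assumes lam: "integral_weight alpha n lam" and mu: "mu \<in> weights alpha n lam"
  shows "int_coefs (lam - mu)"
proof -
  obtain w nu where w: "w \<in> weyl_sub alpha {1..n}" and mu_eq: "mu = w nu"
    and nu: "dominant_integral alpha n nu" and le: "wle alpha n nu lam"
    using mu unfolding weights_def by blast
  have "int_coefs ((lam - nu) + (nu - w nu))"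
    using nonneg_int_coefs_if_wle(2)[OF le]
      integral_minus_weyl_int_coefs[OF w order_refl integral_if_dominant_integral[OF nu]]
    by (rule int_coefs_add)
  then show ?thesis unfolding mu_eq by simp
qed

end

section \<open>The face F_I\<close>

lemma convex_hull_finite_max_face:
  fixes S :: "'a::real_vector set" and f :: "'i \<Rightarrow> 'a \<Rightarrow> real"
  assumes S: "finite S" and x: "x \<in> convex hull S"
    and f: "\<And>i. i \<in> I \<Longrightarrow> linear (f i)"
    and le: "\<And>i y. i \<in> I \<Longrightarrow> y \<in> S \<Longrightarrow> f i y \<le> m i"
    and eq: "\<And>i. i \<in> I \<Longrightarrow> f i x = m i"
  shows "x \<in> convex hull {y \<in> S. \<forall>i\<in>I. f i y = m i}"
proof -
  let ?S' = "{y \<in> S. \<forall>i\<in>I. f i y = m i}"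
  obtain u where u: "\<forall>y\<in>S. 0 \<le> u y" "sum u S = 1" "(\<Sum>y\<in>S. u y *\<^sub>R y) = x"
    using x unfolding convex_hull_finite[OF S] by blast
  \<comment> \<open>all the weight of x sits on points where every f i attains its maximum\<close>
  have u0: "u y = 0" if y: "y \<in> S - ?S'" for y
  proof -
    obtain i where i: "i \<in> I" and "f i y \<noteq> m i" using y by blast
    then have lt: "f i y < m i" using le[OF i] y by force
    have "f i x = (\<Sum>y\<in>S. u y * f i y)"
      unfolding u(3)[symmetric] linear_sum[OF f[OF i]] by (simp add: linear_scale[OF f[OF i]])
    then have "(\<Sum>y\<in>S. u y * (m i - f i y)) = m i * sum u S - f i x"
      by (simp add: algebra_simps sum_subtractf sum_distrib_left)
    also have "\<dots> = 0" using u(2) eq[OF i] by simp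
    finally have "(\<Sum>y\<in>S. u y * (m i - f i y)) = 0" .
    moreover have "0 \<le> u y * (m i - f i y)" if "y \<in> S" for y
      using u(1) le[OF i that] that by simp
    ultimately have "u y * (m i - f i y) = 0"
      using sum_nonneg_eq_0_iff[OF S, of "\<lambda>y. u y * (m i - f i y)"] y by blast
    then show "u y = 0" using lt by simp
  qed
  have "sum u ?S' = sum u S" "(\<Sum>y\<in>?S'. u y *\<^sub>R y) = (\<Sum>y\<in>S. u y *\<^sub>R y)"
    by (intro sum.mono_neutral_left[OF S]; simp add: u0)+
  then have "sum u ?S' = 1" "(\<Sum>y\<in>?S'. u y *\<^sub>R y) = x" using u(2,3) by simp_all
  moreover have "finite ?S'" using S by simp
  ultimately show ?thesis
    using u(1) unfolding convex_hull_finite[OF \<open>finite ?S'\<close>] by blast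
qed

lemma convex_translated_span: "convex {y. y - c \<in> span S}"
proof (rule convexI)
  fix x y :: 'a and u v :: real
  assume "x \<in> {y. y - c \<in> span S}" "y \<in> {y. y - c \<in> span S}" "u + v = 1"
  moreover have "u *\<^sub>R x + v *\<^sub>R y - c = u *\<^sub>R (x - c) + v *\<^sub>R (y - c)" if "u + v = 1"
    using that by (simp add: algebra_simps flip: scaleR_add_left)
  ultimately show "u *\<^sub>R x + v *\<^sub>R y \<in> {y. y - c \<in> span S}"
    by (simp add: span_add span_scale)
qed

locale weight_face = simple_roots +
  fixes lam :: 'a and I :: "nat set"
  assumes dominant_integral_lam: "dominant_integral alpha n lam" and I_subset: "I \<subseteq> {1..n}"
begin

abbreviation Ibar0 :: "nat set" where
  "Ibar0 \<equiv> comp0 alpha n lam I"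

abbreviation orbit_Ibar0 :: "'a set" where
  "orbit_Ibar0 \<equiv> (\<lambda>w. w lam) ` weyl_sub alpha Ibar0"

lemma dominant_lam: "dominant lam"
  using dominant_if_dominant_integral[OF dominant_integral_lam] .

lemma Ibar0_subset: "Ibar0 \<subseteq> {1..n} - I"
  by (auto elim: comp0.cases)

lemma Ibar0_subset_base: "Ibar0 \<subseteq> {1..n}"
  using Ibar0_subset by blast

lemma orthogonal_lam_outside_Ibar0: "k \<in> {1..n} - I \<Longrightarrow> k \<notin> Ibar0 \<Longrightarrow> lam \<bullet> alpha k = 0"
  using dominant_lam comp0.start[of k n I lam alpha] unfolding dominant_def by force

lemma orthogonal_Ibar0_outside_Ibar0:
  "k \<in> {1..n} - I \<Longrightarrow> k \<notin> Ibar0 \<Longrightarrow> j \<in> Ibar0 \<Longrightarrow> alpha j \<bullet> alpha k = 0"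
  using comp0.step[of j alpha n lam I k] by auto

lemma orbit_complement_eq_orbit_Ibar0:
  "v \<in> weyl_sub alpha ({1..n} - I) \<Longrightarrow> \<exists>v'\<in>weyl_sub alpha Ibar0. v lam = v' lam"
proof (induction rule: weyl_sub.induct)
  case id
  then show ?case using weyl_sub.id by blast
next
  case (step w j)
  then obtain v' where v': "v' \<in> weyl_sub alpha Ibar0" "w lam = v' lam" by blast
  show ?case
  proof (cases "j \<in> Ibar0")
    case True
    then show ?thesis using v' weyl_sub.step[OF v'(1) True] by (metis comp_apply)
  next
    case False
    have "refl (alpha j) (v' lam) = v' lam"
      using weyl_sub_commute[OF orthogonal_Ibar0_outside_Ibar0[OF step.hyps(2) False] v'(1)]
        refl_fixed[OF orthogonal_lam_outside_Ibar0[OF step.hyps(2) False]] by simp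
    then show ?thesis using v' by auto
  qed
qed

lemma coef_orbit_Ibar0: "w \<in> weyl_sub alpha Ibar0 \<Longrightarrow> i \<in> I \<Longrightarrow> coef alpha n (w lam) i = coef alpha n lam i"
  using coef_weyl_sub_outside[OF _ Ibar0_subset_base] Ibar0_subset by blast

lemma orbit_Ibar0_if_coefs_on_I:
  assumes w: "w \<in> weyl_sub alpha {1..n}" and eq: "\<forall>i\<in>I. coef alpha n (w lam) i = coef alpha n lam i"
  shows "w lam \<in> orbit_Ibar0"
proof -
  obtain v where "v \<in> weyl_sub alpha ({1..n} - I)" "w lam = v lam"
    using weyl_conjugate_in_parabolic[OF _ dominant_lam w] eq by blast
  then show ?thesis using orbit_complement_eq_orbit_Ibar0 by (metis image_eqI)
qed

lemma face_F_subset_hull_orbit_Ibar0: "face_F alpha n lam I \<subseteq> convex hull orbit_Ibar0"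
proof
  let ?S = "(\<lambda>w. w lam) ` weyl_sub alpha {1..n}"
  fix x assume "x \<in> face_F alpha n lam I"
  then have x: "x \<in> convex hull ?S" and eq: "\<And>i. i \<in> I \<Longrightarrow> coef alpha n x i = coef alpha n lam i"
    unfolding face_F_def weight_polytope_def by auto
  have le: "coef alpha n y i \<le> coef alpha n lam i" if i: "i \<in> I" and y: "y \<in> ?S" for i y
  proof -
    obtain w where w: "w \<in> weyl_sub alpha {1..n}" "y = w lam" using y by blast
    have "nonneg_coefs (lam - w lam)"
      using dominant_minus_weyl_nonneg[OF w(1) order_refl dominant_lam] .
    then show ?thesis using i I_subset w(2) unfolding nonneg_coefs_def by (auto simp: coef_diff)
  qed
  have "finite ?S" using finite_weyl_sub[of "{1..n}"] by simp
  from convex_hull_finite_max_face[OF this x linear_coef le eq]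
  have "x \<in> convex hull {y \<in> ?S. \<forall>i\<in>I. coef alpha n y i = coef alpha n lam i}" .
  also have "\<dots> \<subseteq> convex hull orbit_Ibar0"
    using orbit_Ibar0_if_coefs_on_I by (intro hull_mono) blast
  finally show "x \<in> convex hull orbit_Ibar0" .
qed

lemma convex_face_F: "convex (face_F alpha n lam I)"
proof -
  have "face_F alpha n lam I =
      weight_polytope alpha n lam \<inter> (\<Inter>i\<in>I. {x. coef alpha n x i = coef alpha n lam i})"
    unfolding face_F_def by blast
  moreover have "convex {x. coef alpha n x i = c}" for i c
    using convex_linear_vimage[OF linear_coef convex_singleton, of i c] by (simp add: vimage_def)
  ultimately show ?thesis
    unfolding weight_polytope_def by (simp add: convex_INT convex_Int)
qed

lemma orbit_Ibar0_subset_face_F: "orbit_Ibar0 \<subseteq> face_F alpha n lam I"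
proof
  fix x assume "x \<in> orbit_Ibar0"
  then obtain w where w: "w \<in> weyl_sub alpha Ibar0" and x: "x = w lam" by blast
  then have "w \<in> weyl_sub alpha {1..n}" using weyl_sub_mono[OF Ibar0_subset_base] by blast
  then have "x \<in> weight_polytope alpha n lam"
    unfolding weight_polytope_def x by (intro hull_inc) blast
  then show "x \<in> face_F alpha n lam I" unfolding face_F_def using coef_orbit_Ibar0[OF w] x by blast
qed

lemma face_F_eq_hull: "face_F alpha n lam I = convex hull orbit_Ibar0"
proof (rule antisym)
  show "convex hull orbit_Ibar0 \<subseteq> face_F alpha n lam I"
    using orbit_Ibar0_subset_face_F convex_face_F by (rule hull_minimal)
qed (rule face_F_subset_hull_orbit_Ibar0)

abbreviation displacements :: "'a set" where
  "displacements \<equiv> (\<lambda>w. w lam - lam) ` weyl_sub alpha Ibar0"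

lemma refl_span_displacements:
  assumes j: "j \<in> Ibar0" and y: "y \<in> span displacements"
  shows "refl (alpha j) y \<in> span displacements"
proof -
  have "refl (alpha j) ` displacements \<subseteq> span displacements"
  proof
    fix z assume "z \<in> refl (alpha j) ` displacements"
    then obtain w where w: "w \<in> weyl_sub alpha Ibar0" and z: "z = refl (alpha j) (w lam - lam)" by blast
    have "z = ((refl (alpha j) \<circ> w) lam - lam) - (refl (alpha j) lam - lam)"
      using z linear_diff[OF linear_refl] by simp
    moreover have "(refl (alpha j) \<circ> w) lam - lam \<in> displacements"
      using weyl_sub.step[OF w j] by blast
    moreover have "refl (alpha j) lam - lam \<in> displacements"
      using refl_in_weyl_sub[OF j] by blast
    ultimately show "z \<in> span displacements" by (metis span_base span_diff)
  qed
  then have "span (refl (alpha j) ` displacements) \<subseteq> span displacements"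
    using span_minimal subspace_span by blast
  moreover have "refl (alpha j) y \<in> span (refl (alpha j) ` displacements)"
    using span_linear_image[OF linear_refl] y by blast
  ultimately show ?thesis by blast
qed

lemma alpha_Ibar0_in_span_displacements: "j \<in> Ibar0 \<Longrightarrow> alpha j \<in> span displacements"
proof (induction rule: comp0.induct)
  case (start j)
  have "j \<in> Ibar0" using start.hyps by (rule comp0.start)
  then have "refl (alpha j) \<in> weyl_sub alpha Ibar0" by (rule refl_in_weyl_sub)
  then have "refl (alpha j) lam - lam \<in> displacements" by blast
  then have "- (refl (alpha j) lam - lam) \<in> span displacements"
    by (intro span_neg span_base)
  then have "lam - refl (alpha j) lam \<in> span displacements" by simp
  moreover have "lam \<bullet> alpha j \<noteq> 0" using start.hyps(2) by simp
  ultimately show ?case by (rule in_span_if_refl_displacement)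
next
  case (step i j)
  have "j \<in> Ibar0" using comp0.step[OF step.hyps(1-4)] .
  then have "alpha i - refl (alpha j) (alpha i) \<in> span displacements"
    using span_diff[OF step.IH refl_span_displacements[OF _ step.IH]] by simp
  then show ?case using step.hyps(4) by (rule in_span_if_refl_displacement)
qed

lemma span_displacements: "span displacements = span (alpha ` Ibar0)"
proof
  have "displacements \<subseteq> span (alpha ` Ibar0)"
  proof
    fix d assume "d \<in> displacements"
    then obtain w where w: "w \<in> weyl_sub alpha Ibar0" and d: "d = w lam - lam" by blast
    have "- (lam - w lam) \<in> span (alpha ` Ibar0)"
      using weyl_sub_minus_in_span[OF w] by (rule span_neg)
    then show "d \<in> span (alpha ` Ibar0)" unfolding d by simp
  qed
  then show "span displacements \<subseteq> span (alpha ` Ibar0)"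
    using span_minimal subspace_span by blast
next
  have "alpha ` Ibar0 \<subseteq> span displacements"
    using alpha_Ibar0_in_span_displacements by blast
  then show "span (alpha ` Ibar0) \<subseteq> span displacements"
    using span_minimal subspace_span by blast
qed

lemma hull_orbit_Ibar0_minus_lam_in_span:
  assumes "mu \<in> convex hull orbit_Ibar0"
  shows "mu - lam \<in> span displacements"
proof -
  have "convex {y. y - lam \<in> span displacements}" by (rule convex_translated_span)
  moreover have "orbit_Ibar0 \<subseteq> {y. y - lam \<in> span displacements}"
  proof
    fix y assume "y \<in> orbit_Ibar0"
    then have "y - lam \<in> displacements" by blast
    then show "y \<in> {y. y - lam \<in> span displacements}" by (simp add: span_base)
  qed
  ultimately have "convex hull orbit_Ibar0 \<subseteq> {y. y - lam \<in> span displacements}"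
    by (intro hull_minimal)
  then show ?thesis using assms by blast
qed

lemma span_face_differences:
  "span {mu - nu | mu nu. mu \<in> face_F alpha n lam I \<and> nu \<in> face_F alpha n lam I}
     = span displacements"
  (is "span ?D = _")
proof
  have "?D \<subseteq> span displacements"
  proof
    fix d assume "d \<in> ?D"
    then obtain mu nu where d: "d = mu - nu"
      and mu: "mu \<in> convex hull orbit_Ibar0"
      and nu: "nu \<in> convex hull orbit_Ibar0"
      unfolding face_F_eq_hull by blast
    have "(mu - lam) - (nu - lam) \<in> span displacements"
      using hull_orbit_Ibar0_minus_lam_in_span[OF mu] hull_orbit_Ibar0_minus_lam_in_span[OF nu] by (rule span_diff)
    then show "d \<in> span displacements" unfolding d by simp
  qed
  then show "span ?D \<subseteq> span displacements" using span_minimal subspace_span by blast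
next
  have orbit: "w lam \<in> face_F alpha n lam I" if "w \<in> weyl_sub alpha Ibar0" for w
    unfolding face_F_eq_hull using that by (intro hull_inc) blast
  have "displacements \<subseteq> ?D"
  proof
    fix d assume "d \<in> displacements"
    then obtain w where w: "w \<in> weyl_sub alpha Ibar0" and d: "d = w lam - lam" by blast
    have "lam \<in> face_F alpha n lam I" using orbit[OF weyl_sub.id] by simp
    then show "d \<in> ?D" unfolding d using orbit[OF w] by blast
  qed
  then show "span displacements \<subseteq> span ?D" by (rule span_mono)
qed

lemma dim_face_differences:
  "dim (span {mu - nu | mu nu. mu \<in> face_F alpha n lam I \<and> nu \<in> face_F alpha n lam I})
     = card Ibar0"
proof -
  have "independent (alpha ` Ibar0)"
    using independent_mono[OF independent_alpha] Ibar0_subset_base by blast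
  then have "dim (span (alpha ` Ibar0)) = card (alpha ` Ibar0)"
    unfolding dim_span by (rule dim_eq_card_independent)
  also have "\<dots> = card Ibar0"
    using card_image[OF inj_on_subset[OF inj_on_alpha Ibar0_subset_base]] .
  finally show ?thesis unfolding span_face_differences span_displacements .
qed

lemma longest_lam_in_face_P:
  assumes u: "longest_elem alpha Ibar0 u"
  shows "u lam \<in> face_P alpha n lam I"
proof -
  have uJ: "u \<in> weyl_sub alpha Ibar0" using u unfolding longest_elem_def by blast
  have "wle alpha n lam lam" unfolding wle_def by (intro exI[of _ "\<lambda>_. 0"]) simp
  then have "u lam \<in> weights alpha n lam"
    unfolding weights_def using uJ weyl_sub_mono[OF Ibar0_subset_base] dominant_integral_lam by blast
  then show ?thesis unfolding face_P_def using coef_orbit_Ibar0[OF uJ] by blast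
qed

lemma orbit_Ibar0_above_longest:
  assumes u: "longest_elem alpha Ibar0 u" and v: "v \<in> weyl_sub alpha Ibar0"
  shows "nonneg_coefs (v lam - u lam)"
proof -
  have uJ: "u \<in> weyl_sub alpha Ibar0" using u unfolding longest_elem_def by blast
  obtain u' where u': "u' \<in> weyl_sub alpha Ibar0" "u \<circ> u' = id"
    using weyl_sub_inverse[OF uJ] by blast
  have u'v: "u' \<circ> v \<in> weyl_sub alpha Ibar0" using weyl_sub_comp[OF u'(1) v] .
  define b where "b = lam - u' (v lam)"
  have "v lam - u lam = - u b"
    unfolding b_def using u'(2) linear_diff[OF linear_weyl_sub[OF uJ]] by (simp add: fun_eq_iff)
  also have "nonneg_coefs (- u b)"
  proof (rule longest_elem_negates_nonneg[OF Ibar0_subset_base u])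
    show "nonneg_coefs b"
      unfolding b_def using dominant_minus_weyl_nonneg[OF u'v Ibar0_subset_base dominant_lam] by simp
    show "coef alpha n b j = 0" if "j \<notin> Ibar0" for j
      unfolding b_def
      using coef_span_outside[OF weyl_sub_minus_in_span[OF u'v] Ibar0_subset_base that] by simp
  qed
  finally show ?thesis .
qed

lemma longest_lam_least_in_face_P:
  assumes u: "longest_elem alpha Ibar0 u" and mu: "mu \<in> face_P alpha n lam I"
  shows "wle alpha n (u lam) mu"
proof (rule wle_if_nonneg_int_coefs)
  have "mu \<in> face_F alpha n lam I"
    using mu weights_in_weight_polytope[OF dominant_lam] unfolding face_P_def face_F_def by blast
  also have "\<dots> \<subseteq> {y. nonneg_coefs (y - u lam)}"
    unfolding face_F_eq_hull
  proof (rule hull_minimal)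
    show "orbit_Ibar0 \<subseteq> {y. nonneg_coefs (y - u lam)}"
      using orbit_Ibar0_above_longest[OF u] by blast
  qed (rule convex_nonneg_coefs_above)
  finally show "nonneg_coefs (mu - u lam)" by simp
next
  have uW: "u \<in> weyl_sub alpha {1..n}"
    using u weyl_sub_mono[OF Ibar0_subset_base] unfolding longest_elem_def by blast
  have lam: "integral_weight alpha n lam"
    using integral_if_dominant_integral[OF dominant_integral_lam] .
  have "mu \<in> weights alpha n lam" using mu unfolding face_P_def by blast
  then have "int_coefs ((lam - u lam) - (lam - mu))"
    using integral_minus_weyl_int_coefs[OF uW order_refl lam] int_coefs_minus_weight[OF lam]
    by (blast intro: int_coefs_diff)
  then show "int_coefs (mu - u lam)" by simp
qed

end

theorem theorem4p3:
  fixes Phi :: "'a::euclidean_space set" and alpha :: "nat \<Rightarrow> 'a" and n :: nat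
    and lam :: 'a and I :: "nat set" and u0 :: "'a \<Rightarrow> 'a"
  assumes "root_system Phi" and "irreducible_rs Phi" and "is_base Phi alpha n"
    and "dominant_integral alpha n lam"
    and "I \<subseteq> {1..n}"
    and "longest_elem alpha (comp0 alpha n lam I) u0"
  shows "(face_F alpha n lam I = convex hull ((\<lambda>w. w lam) ` weyl_sub alpha (comp0 alpha n lam I))
    \<and> (u0 lam \<in> face_P alpha n lam I \<and> (\<forall>mu\<in>face_P alpha n lam I. wle alpha n (u0 lam) mu))
    \<and> (span {mu - nu | mu nu. mu \<in> face_F alpha n lam I \<and> nu \<in> face_F alpha n lam I}
           = span (alpha ` comp0 alpha n lam I)
         \<and> dim (span {mu - nu | mu nu. mu \<in> face_F alpha n lam I \<and> nu \<in> face_F alpha n lam I})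
           = card (comp0 alpha n lam I)))"
proof -
  interpret weight_face Phi alpha n lam I
    using assms by unfold_locales auto
  show ?thesis
    using face_F_eq_hull longest_lam_in_face_P[OF assms(6)] longest_lam_least_in_face_P[OF assms(6)]
      span_face_differences span_displacements dim_face_differences by auto
qed

end
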